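(* Let $A$ be a commutative $\mathbb Q$-algebra, $a\in A$ a non-zero-divisor, $B=A[z]$ and $\mathcal D=\partial_z-a:B\to B$, $h\mapsto h'-ah$. Let $f=c_0+c_1z+\cdots+c_dz^d\in B$ with $v_a(c_i)\ge i+1$ for $0\le i\le d$. Then for every $g\in B$ we have $gf^m\in\mathrm{Im}\,\mathcal D$ for all sufficiently large $m$.
   Context: For $c\in A$, the $a$-order $v_a(c)\in\mathbb Z_{\ge0}\cup\{\infty\}$ is the supremum of the integers $m\ge0$ with $c\in Aa^m$ (so $v_a(c)=\infty$ if $c\in\bigcap_{m\ge1}Aa^m$). *)

theory Defs
  imports "HOL-Library.Extended_Nat" "HOL-Computational_Algebra.Polynomial"
begin

definition a_order :: "'a::comm_ring_1 \<Rightarrow> 'a \<Rightarrow> enat" where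
  "a_order a c = Sup {enat m | m. \<exists>b. c = b * a ^ m}"

text \<open>Formal derivative d/dz on A[z] (the library's pderiv needs no zero divisors, so we write it out).\<close>
definition zderiv :: "'a::comm_ring_1 poly \<Rightarrow> 'a poly" where
  "zderiv h = (\<Sum>i\<le>degree h. monom (of_nat i * coeff h i) (i - 1))"

definition Dop :: "'a::comm_ring_1 \<Rightarrow> 'a poly \<Rightarrow> 'a poly" where
  "Dop a h = zderiv h - smult a h"

end

theory Submission
  imports Defs
begin

(* Call p "a-weighted of weight k" when a^(i+k) divides the i-th
   coefficient of p for every i.  Weights add under multiplication, so the
   hypothesis on f (weight 1) gives weight m for f^m, and multiplying by an
   arbitrary g of degree d lowers the weight by at most d.  Hence g*f^m has
   weight at least 1 once m > deg g.  Finally every polynomial of weight 1 lies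
   in the image of D = d/dz - a: it is a sum of monomials b*a^(n+1)*z^n, and
   D(-b*a^n*z^n) = b*a^(n+1)*z^n - n*b*a^n*z^(n-1), where the correction term is
   again such a monomial of lower degree, so induction on n applies.
   No division is needed, so the theorem holds in every commutative ring. *)

lemma coeff_zderiv: "coeff (zderiv h) n = of_nat (Suc n) * coeff h (Suc n)"
proof -
  have "coeff (zderiv h) n = (\<Sum>i\<le>degree h. if i = Suc n then of_nat i * coeff h i else 0)"
    unfolding zderiv_def coeff_sum coeff_monom
    by (rule sum.cong) (auto split: nat_diff_split)
  then show ?thesis
    by (auto simp: coeff_eq_0 not_le)
qed

lemma Dop_add: "Dop a (x + y) = Dop a x + Dop a y"
  by (rule poly_eqI) (simp add: Dop_def coeff_zderiv algebra_simps)

lemma Dop_monom: "Dop a (monom c n) = monom (of_nat n * c) (n - 1) - monom (a * c) n"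
  by (rule poly_eqI) (cases n, auto simp: Dop_def coeff_zderiv coeff_monom)

lemma range_Dop_add:
  "x \<in> range (Dop a) \<Longrightarrow> y \<in> range (Dop a) \<Longrightarrow> x + y \<in> range (Dop a)"
  by (auto simp: Dop_add[symmetric])

lemma range_Dop_sum:
  assumes "finite S" and "\<And>i. i \<in> S \<Longrightarrow> F i \<in> range (Dop a)"
  shows "sum F S \<in> range (Dop a)"
  using assms
proof (induction S rule: finite_induct)
  case empty
  have "Dop a 0 = 0" using Dop_add[of a 0 0] by simp
  then show ?case by (metis rangeI sum.empty)
qed (simp add: range_Dop_add)

text \<open>The monomials b a^(n+1) z^n lie in the image of D: applying D to -b a^n z^n
  produces this monomial up to a correction of the same shape in degree n - 1.\<close>
lemma monom_in_range_Dop: "monom (b * a ^ Suc n) n \<in> range (Dop a)"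
proof (induction n arbitrary: b)
  case 0
  have "monom (b * a ^ Suc 0) 0 = Dop a (monom (- b) 0)"
    by (rule poly_eqI) (simp add: Dop_monom coeff_monom)
  then show ?case by (metis rangeI)
next
  case (Suc n)
  have "monom (b * a ^ Suc (Suc n)) (Suc n)
      = Dop a (monom (- (b * a ^ Suc n)) (Suc n)) + monom ((of_nat (Suc n) * b) * a ^ Suc n) n"
    by (rule poly_eqI) (simp add: Dop_monom coeff_monom algebra_simps)
  then show ?case by (metis Suc.IH range_Dop_add rangeI)
qed

definition a_weighted :: "'a::comm_ring_1 \<Rightarrow> nat \<Rightarrow> 'a poly \<Rightarrow> bool" where
  "a_weighted a k p \<longleftrightarrow> (\<forall>i. a ^ (i + k) dvd coeff p i)"

lemma weight_one_in_range_Dop: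
  assumes "a_weighted a 1 p"
  shows "p \<in> range (Dop a)"
proof -
  have "monom (coeff p i) i \<in> range (Dop a)" for i
  proof -
    obtain b where "coeff p i = b * a ^ Suc i"
      using assms unfolding a_weighted_def by (metis Suc_eq_plus1 dvdE mult.commute)
    then show ?thesis using monom_in_range_Dop[of b a i] by simp
  qed
  then have "(\<Sum>i\<le>degree p. monom (coeff p i) i) \<in> range (Dop a)"
    by (intro range_Dop_sum) simp_all
  then show ?thesis by (simp add: poly_as_sum_of_monoms)
qed

lemma a_weighted_mono: "a_weighted a k p \<Longrightarrow> l \<le> k \<Longrightarrow> a_weighted a l p"
  unfolding a_weighted_def by (metis add_le_cancel_left le_imp_power_dvd dvd_trans)

text \<open>Weights add under multiplication: a^(j+k) a^(i-j+l) = a^(i+k+l).\<close>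
lemma a_weighted_mult:
  assumes "a_weighted a k p" and "a_weighted a l q"
  shows "a_weighted a (k + l) (p * q)"
  unfolding a_weighted_def
proof
  fix i
  show "a ^ (i + (k + l)) dvd coeff (p * q) i"
    unfolding coeff_mult
  proof (rule dvd_sum)
    fix j assume "j \<in> {..i}"
    then have "i + (k + l) = (j + k) + (i - j + l)" by simp
    then have "a ^ (i + (k + l)) = a ^ (j + k) * a ^ (i - j + l)"
      by (metis power_add)
    then show "a ^ (i + (k + l)) dvd coeff p j * coeff q (i - j)"
      using assms unfolding a_weighted_def by (simp add: mult_dvd_mono)
  qed
qed

lemma a_weighted_power: "a_weighted a k p \<Longrightarrow> a_weighted a (k * m) (p ^ m)"
proof (induction m)
  case 0
  show ?case unfolding a_weighted_def by (simp add: coeff_1)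
next
  case (Suc m)
  then show ?case using a_weighted_mult[of a k p "k * m" "p ^ m"] by (simp add: add.commute)
qed

text \<open>Multiplying by a polynomial of degree d costs at most d in weight, since only
  the coefficients g_j with j \<le> d contribute.\<close>
lemma a_weighted_mult_left:
  assumes "a_weighted a k p" and "degree g \<le> k"
  shows "a_weighted a (k - degree g) (g * p)"
  unfolding a_weighted_def
proof
  fix i
  show "a ^ (i + (k - degree g)) dvd coeff (g * p) i"
    unfolding coeff_mult
  proof (rule dvd_sum)
    fix j assume j: "j \<in> {..i}"
    show "a ^ (i + (k - degree g)) dvd coeff g j * coeff p (i - j)"
    proof (cases "j \<le> degree g")
      case True
      then have "a ^ (i + (k - degree g)) dvd a ^ (i - j + k)"
        using j assms(2) by (intro le_imp_power_dvd) simp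
      then show ?thesis
        using assms(1) unfolding a_weighted_def by (meson dvd_mult dvd_trans)
    qed (simp add: coeff_eq_0)
  qed
qed

lemma dvd_of_a_order:
  assumes "a_order a c \<ge> enat (Suc n)"
  shows "a ^ Suc n dvd c"
proof -
  have "enat n < Sup {enat m | m. \<exists>b. c = b * a ^ m}"
    using assms unfolding a_order_def by (simp add: Suc_ile_eq)
  then obtain m b where "n < m" "c = b * a ^ m"
    by (auto simp: less_Sup_iff)
  then have "a ^ Suc n dvd a ^ m" by (intro le_imp_power_dvd) simp
  then show ?thesis using \<open>c = b * a ^ m\<close> by simp
qed

theorem corollary2p12:
  fixes a :: "'a::comm_ring_1" and f :: "'a poly"
  assumes Qalg: "\<And>n::nat. n > 0 \<Longrightarrow> (of_nat n :: 'a) dvd 1"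
    and nzd: "\<And>x::'a. a * x = 0 \<Longrightarrow> x = 0"
    and ord: "\<And>i. i \<le> degree f \<Longrightarrow> a_order a (coeff f i) \<ge> enat (i + 1)"
  shows "\<forall>g :: 'a poly. \<exists>M. \<forall>m\<ge>M. g * f ^ m \<in> range (Dop a)"
proof (intro allI exI impI)
  fix g :: "'a poly" and m assume m: "Suc (degree g) \<le> m"
  have "a ^ (i + 1) dvd coeff f i" for i
  proof (cases "i \<le> degree f")
    case True
    then show ?thesis using ord dvd_of_a_order by (metis Suc_eq_plus1)
  qed (simp add: coeff_eq_0)
  then have "a_weighted a 1 f"
    unfolding a_weighted_def by blast
  then have "a_weighted a m (f ^ m)"
    using a_weighted_power by fastforce
  then have "a_weighted a (m - degree g) (g * f ^ m)"
    using m by (intro a_weighted_mult_left) simp_all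
  then have "a_weighted a 1 (g * f ^ m)"
    by (rule a_weighted_mono) (use m in simp)
  then show "g * f ^ m \<in> range (Dop a)"
    by (rule weight_one_in_range_Dop)
qed

end
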